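(* Let $P=\{S_1,\ldots,S_n\}$ be a homothetic square packing with contact graph $G=([n],E)$ whose radii $r_1,\ldots,r_n$ satisfy the weak generic condition. If either of the graphs $([n],E_x)$, $([n],E_y)$ contains a cycle $(n_1,\ldots,n_k)$ with $k\le n-2$, then $k=4$ and the squares $S_{n_1},S_{n_2},S_{n_3},S_{n_4}$ share a corner.
   Context: Let $S=\{(x,y): -1\le x,y\le 1\}$. A homothetic packing of $n$ squares is a set $P=\{S_1,\ldots,S_n\}$ with $S_i=r_iS+p_i$, $r_i>0$ (radii), $p_i=(x_i,y_i)\in\mathbb{R}^2$ (centres), such that distinct squares have disjoint interiors. Its contact graph is $G=([n],E)$ where $\{i,j\}\in E$ iff $i\ne j$ and $S_i\cap S_j\ne\emptyset$; $E_x$ is the set of pairs $\{i,j\}\in E$ with $r_i+r_j=|x_i-x_j|\ge|y_i-y_j|$ and $E_y$ the set with $r_i+r_j=|y_i-y_j|\ge|x_i-x_j|$. The radii satisfy the weak generic condition if the only function $\sigma:[n]\to\{-1,0,1\}$ with at least $4$ zeroes and $\sum_{i=1}^n\sigma_ir_i=0$ is the zero function. Four squares share a corner if they have a common point which is a corner of each of them. *)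

theory Defs
  imports "HOL-Analysis.Analysis"
begin

definition sq :: "real \<Rightarrow> real \<times> real \<Rightarrow> (real \<times> real) set" where
  "sq r p = {q. \<bar>fst q - fst p\<bar> \<le> r \<and> \<bar>snd q - snd p\<bar> \<le> r}"

definition homothetic_packing :: "nat \<Rightarrow> (nat \<Rightarrow> real) \<Rightarrow> (nat \<Rightarrow> real \<times> real) \<Rightarrow> bool" where
  "homothetic_packing n r p \<longleftrightarrow>
     (\<forall>i\<in>{1..n}. r i > 0) \<and>
     (\<forall>i\<in>{1..n}. \<forall>j\<in>{1..n}. i \<noteq> j \<longrightarrow>
        interior (sq (r i) (p i)) \<inter> interior (sq (r j) (p j)) = {})"

definition contact_edges :: "nat \<Rightarrow> (nat \<Rightarrow> real) \<Rightarrow> (nat \<Rightarrow> real \<times> real) \<Rightarrow> nat set set" where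
  "contact_edges n r p = {{i, j} | i j. i \<in> {1..n} \<and> j \<in> {1..n} \<and> i \<noteq> j \<and>
      sq (r i) (p i) \<inter> sq (r j) (p j) \<noteq> {}}"

definition edges_x :: "nat \<Rightarrow> (nat \<Rightarrow> real) \<Rightarrow> (nat \<Rightarrow> real \<times> real) \<Rightarrow> nat set set" where
  "edges_x n r p = {{i, j} | i j. {i, j} \<in> contact_edges n r p \<and>
      r i + r j = \<bar>fst (p i) - fst (p j)\<bar> \<and> \<bar>fst (p i) - fst (p j)\<bar> \<ge> \<bar>snd (p i) - snd (p j)\<bar>}"

definition edges_y :: "nat \<Rightarrow> (nat \<Rightarrow> real) \<Rightarrow> (nat \<Rightarrow> real \<times> real) \<Rightarrow> nat set set" where
  "edges_y n r p = {{i, j} | i j. {i, j} \<in> contact_edges n r p \<and>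
      r i + r j = \<bar>snd (p i) - snd (p j)\<bar> \<and> \<bar>snd (p i) - snd (p j)\<bar> \<ge> \<bar>fst (p i) - fst (p j)\<bar>}"

definition weak_generic :: "nat \<Rightarrow> (nat \<Rightarrow> real) \<Rightarrow> bool" where
  "weak_generic n r \<longleftrightarrow>
     (\<forall>\<sigma> :: nat \<Rightarrow> int. (\<forall>i\<in>{1..n}. \<sigma> i \<in> {-1, 0, 1}) \<and>
        card {i\<in>{1..n}. \<sigma> i = 0} \<ge> 4 \<and> (\<Sum>i\<in>{1..n}. of_int (\<sigma> i) * r i) = 0
        \<longrightarrow> (\<forall>i\<in>{1..n}. \<sigma> i = 0))"

definition is_cycle :: "nat \<Rightarrow> nat set set \<Rightarrow> nat list \<Rightarrow> bool" where
  "is_cycle n F c \<longleftrightarrow> length c \<ge> 3 \<and> distinct c \<and> set c \<subseteq> {1..n} \<and>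
     (\<forall>i < length c. {c ! i, c ! ((i + 1) mod length c)} \<in> F)"

definition corners :: "real \<Rightarrow> real \<times> real \<Rightarrow> (real \<times> real) set" where
  "corners r p = {(fst p + a * r, snd p + b * r) | a b. a \<in> {-1, 1} \<and> b \<in> {-1, 1}}"

definition share_corner :: "(nat \<Rightarrow> real) \<Rightarrow> (nat \<Rightarrow> real \<times> real) \<Rightarrow> nat set \<Rightarrow> bool" where
  "share_corner r p I \<longleftrightarrow> (\<exists>q. \<forall>i\<in>I. q \<in> corners (r i) (p i))"

end

theory Submission
  imports Defs "HOL-Library.Periodic_Fun"
begin

(*
  Index the cycle k-periodically by the integers and walk along it in the contact direction:
  each step moves the centre by \<plusminus>(r_i + r_j), and since the walk closes up, these signed sums
  of radii add up to zero. Half the coefficient of each radius gives a {-1,0,1}-combination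
  vanishing at the n - k \<ge> 2 vertices off the cycle and at the changes of direction, which are
  even in number and not absent. The weak generic condition therefore forces the directions to
  alternate: k is even and all squares of the cycle touch one line, alternately from the two
  sides, so squares on the same side have disjoint extents along the line.
  Now take the square m with the highest top among those on one side, and orient the cycle
  (l \<mapsto> -l) so that m - 1 lies below m + 1. Then the top of m - 1, the bottom of m + 1 and the
  top of m + 2 all sit at the level of the bottom of m. For k = 4 this is the common corner;
  for k \<ge> 6 the squares m - 2 and m + 3 force m - 1 and m + 2 to have equal radii,
  contradicting genericity.
*)

section \<open>Squares and their contacts\<close>

lemma sq_Times: "sq r p = {fst p - r..fst p + r} \<times> {snd p - r..snd p + r}"
  by (auto simp: sq_def abs_le_iff)

lemma interior_sq: "interior (sq r p) = {q. \<bar>fst q - fst p\<bar> < r \<and> \<bar>snd q - snd p\<bar> < r}"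
  by (auto simp: sq_Times interior_Times abs_less_iff)

lemma homothetic_packing_interiors_disjoint:
  assumes "homothetic_packing n r p" "i \<in> {1..n}" "j \<in> {1..n}" "i \<noteq> j"
    and "\<bar>a - fst (p i)\<bar> < r i" "\<bar>b - snd (p i)\<bar> < r i"
    and "\<bar>a - fst (p j)\<bar> < r j" "\<bar>b - snd (p j)\<bar> < r j"
  shows False
proof -
  have "(a, b) \<in> interior (sq (r i) (p i)) \<inter> interior (sq (r j) (p j))"
    using assms(5-) by (simp add: interior_sq)
  then show False
    using assms(1-4) unfolding homothetic_packing_def by blast
qed

lemma mem_cornersI:
  assumes "\<bar>a - fst p\<bar> = r" "\<bar>b - snd p\<bar> = r"
  shows "(a, b) \<in> corners r p"
proof -
  have "\<exists>e\<in>{-1, 1}. x = e * r" if "\<bar>x\<bar> = r" for x :: real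
    using that by (cases "0 \<le> x") auto
  then obtain e f where ef: "e \<in> {-1, 1}" "f \<in> {-1, 1}"
    and eqs: "a - fst p = e * r" "b - snd p = f * r"
    using assms by blast
  have "(a, b) = (fst p + e * r, snd p + f * r)"
    by (simp flip: eqs)
  then show ?thesis
    unfolding corners_def using ef by blast
qed

lemma edges_x_contact:
  assumes "{i, j} \<in> edges_x n r p"
  shows "r i + r j = \<bar>fst (p i) - fst (p j)\<bar> \<and> \<bar>snd (p i) - snd (p j)\<bar> \<le> \<bar>fst (p i) - fst (p j)\<bar>"
proof -
  obtain i' j' where "{i, j} = {i', j'}" "r i' + r j' = \<bar>fst (p i') - fst (p j')\<bar>"
    "\<bar>snd (p i') - snd (p j')\<bar> \<le> \<bar>fst (p i') - fst (p j')\<bar>"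
    using assms unfolding edges_x_def by blast
  then show ?thesis
    by (auto simp: doubleton_eq_iff abs_minus_commute add.commute)
qed

lemma edges_y_contact:
  assumes "{i, j} \<in> edges_y n r p"
  shows "r i + r j = \<bar>snd (p i) - snd (p j)\<bar> \<and> \<bar>fst (p i) - fst (p j)\<bar> \<le> \<bar>snd (p i) - snd (p j)\<bar>"
proof -
  obtain i' j' where "{i, j} = {i', j'}" "r i' + r j' = \<bar>snd (p i') - snd (p j')\<bar>"
    "\<bar>fst (p i') - fst (p j')\<bar> \<le> \<bar>snd (p i') - snd (p j')\<bar>"
    using assms unfolding edges_y_def by blast
  then show ?thesis
    by (auto simp: doubleton_eq_iff abs_minus_commute add.commute)
qed

lemma same_side_squares_overlap:
  fixes x1 y1 r1 x2 y2 r2 L D :: real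
  assumes "0 < r1" "0 < r2" "\<bar>y1 - y2\<bar> < r1 + r2"
    and "x1 + D * r1 = L" "x2 + D * r2 = L" "\<bar>D\<bar> = 1"
  shows "\<exists>a b. \<bar>a - x1\<bar> < r1 \<and> \<bar>b - y1\<bar> < r1 \<and> \<bar>a - x2\<bar> < r2 \<and> \<bar>b - y2\<bar> < r2"
proof -
  define lo where "lo = max (y1 - r1) (y2 - r2)"
  define hi where "hi = min (y1 + r1) (y2 + r2)"
  have "D = 1 \<or> D = -1"
    using assms(6) by linarith
  then have "\<bar>L - D * min r1 r2 / 2 - x1\<bar> < r1 \<and> \<bar>L - D * min r1 r2 / 2 - x2\<bar> < r2"
    using assms(1,2,4,5) by (auto simp: abs_less_iff)
  moreover have "lo < hi" "y1 - r1 \<le> lo" "y2 - r2 \<le> lo" "hi \<le> y1 + r1" "hi \<le> y2 + r2"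
    using assms(1-3) by (auto simp: lo_def hi_def abs_less_iff)
  then have "\<bar>(lo + hi) / 2 - y1\<bar> < r1 \<and> \<bar>(lo + hi) / 2 - y2\<bar> < r2"
    by (simp add: abs_less_iff field_simps)
  ultimately show ?thesis
    by blast
qed

section \<open>Periodic sequences on the integers\<close>

lemma periodic_fun_simple_mod_offset:
  fixes f :: "int \<Rightarrow> 'a"
  assumes "periodic_fun_simple f k"
  shows "f (a + (l - a) mod k) = f l"
proof -
  interpret periodic_fun_simple f k by fact
  show ?thesis
    using plus_of_int[of "a + (l - a) mod k" "(l - a) div k"]
    by (simp add: algebra_simps mod_div_mult_eq)
qed

lemma periodic_fun_simple_mod:
  fixes f :: "int \<Rightarrow> 'a"
  assumes "periodic_fun_simple f k"
  shows "f (l mod k) = f l"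
  using periodic_fun_simple_mod_offset[OF assms, of 0] by simp

lemma periodic_fun_simple_allI:
  fixes f :: "int \<Rightarrow> 'a"
  assumes "periodic_fun_simple f k" "0 < k" "\<forall>l\<in>{0..<k}. P (f l)"
  shows "P (f l)"
  using assms(3)[rule_format, of "l mod k"] assms(2) periodic_fun_simple_mod[OF assms(1)] by simp

lemma periodic_fun_simple_shift:
  fixes f :: "int \<Rightarrow> 'a"
  assumes "periodic_fun_simple f k"
  shows "periodic_fun_simple (\<lambda>l. f (l - a)) k"
  using assms unfolding periodic_fun_simple_def by (metis diff_add_eq)

lemma shift_invariant_const:
  fixes f :: "int \<Rightarrow> 'a"
  assumes "\<And>l. f (l + 1) = f l"
  shows "f l = f 0"
proof (induction l rule: int_induct[where k=0])
  case (step2 i)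
  then show ?case using assms[of "i - 1"] by simp
qed (simp_all add: assms)

lemma periodic_fun_simple_reflect:
  fixes f :: "int \<Rightarrow> 'a"
  assumes "periodic_fun_simple f k"
  shows "periodic_fun_simple (\<lambda>l. f (- l)) k"
  unfolding periodic_fun_simple_def
proof
  show "f (- (l + k)) = f (- l)" for l
    using assms[unfolded periodic_fun_simple_def, rule_format, of "- (l + k)"] by simp
qed

lemma (in comm_monoid_set) periodic_shift:
  fixes g :: "int \<Rightarrow> 'a"
  assumes "periodic_fun_simple g k"
  shows "F (\<lambda>l. g (l + 1)) {0..<k} = F g {0..<k}"
proof (cases "0 < k")
  case True
  have "F (\<lambda>l. g (l + 1)) {0..<k} = F g ((\<lambda>l. l + 1) ` {0..<k})"
    by (subst reindex) (simp_all add: comp_def)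
  also have "(\<lambda>l. l + 1) ` {0..<k} = insert k {1..<k}"
    using True by (auto simp: image_iff intro: bexI[of _ "x - 1" for x])
  also have "F g (insert k {1..<k}) = f (g 0) (F g {1..<k})"
    using periodic_fun_simple.plus_period[OF assms, of 0] by simp
  also have "\<dots> = F g (insert 0 {1..<k})" by simp
  also have "insert 0 {1..<k} = {0..<k}" using True by auto
  finally show ?thesis .
qed simp

lemma card_sign_changes_even:
  fixes d :: "int \<Rightarrow> int"
  assumes "periodic_fun_simple d k" "\<forall>l. d l \<in> {-1, 1}"
  shows "even (card {l\<in>{0..<k}. d (l - 1) \<noteq> d l})"
proof -
  have "(\<Prod>l\<in>{0..<k}. d (l - 1) * d l) = (\<Prod>l\<in>{0..<k}. d l * d l)"
    using prod.periodic_shift[OF periodic_fun_simple_shift[OF assms(1), of 1]]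
    by (simp add: prod.distrib)
  also have "\<dots> = 1"
  proof (intro prod.neutral ballI)
    show "d l * d l = 1" for l
      using assms(2)[rule_format, of l] by auto
  qed
  finally have "(\<Prod>l\<in>{0..<k}. d (l - 1) * d l) = 1" .
  moreover have "(\<Prod>l\<in>{0..<k}. d (l - 1) * d l) = (\<Prod>l\<in>{0..<k}. if d (l - 1) \<noteq> d l then -1 else 1)"
  proof (rule prod.cong[OF refl])
    show "d (l - 1) * d l = (if d (l - 1) \<noteq> d l then -1 else 1)" for l
      using assms(2)[rule_format, of l] assms(2)[rule_format, of "l - 1"] by auto
  qed
  moreover have "\<dots> = (-1) ^ card {l\<in>{0..<k}. d (l - 1) \<noteq> d l}"
    by (simp add: prod.If_cases Int_def)
  ultimately show ?thesis
    by (simp add: minus_one_power_iff split: if_splits)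
qed

lemma sign_changes_ge_2:
  fixes d :: "int \<Rightarrow> int" and w :: "int \<Rightarrow> real"
  assumes d: "periodic_fun_simple d k" "\<forall>l. d l \<in> {-1, 1}" and "0 < k"
    and w: "\<forall>l. 0 < w l" and balanced: "(\<Sum>l\<in>{0..<k}. of_int (d l) * w l) = 0"
  shows "2 \<le> card {l\<in>{0..<k}. d (l - 1) \<noteq> d l}"
proof -
  have "card {l\<in>{0..<k}. d (l - 1) \<noteq> d l} \<noteq> 0"
  proof
    assume "card {l\<in>{0..<k}. d (l - 1) \<noteq> d l} = 0"
    then have "\<forall>l\<in>{0..<k}. d (l - 1) = d l"
      by (subst (asm) card_0_eq) (auto intro: finite_subset[OF _ finite_atLeastLessThan_int])
    moreover have "periodic_fun_simple (\<lambda>l. d (l - 1) = d l) k"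
      using d(1) periodic_fun_simple_shift[OF d(1), of 1] unfolding periodic_fun_simple_def by simp
    ultimately have "d (l - 1) = d l" for l
      using periodic_fun_simple_allI[where P = "\<lambda>x. x", OF _ \<open>0 < k\<close>] by blast
    then have const: "d l = d 0" for l
      by (intro shift_invariant_const) (metis add_diff_cancel)
    have "(\<Sum>l\<in>{0..<k}. of_int (d l) * w l) = of_int (d 0) * (\<Sum>l\<in>{0..<k}. w l)"
      unfolding sum_distrib_left by (metis const)
    moreover have "0 < (\<Sum>l\<in>{0..<k}. w l)"
      using \<open>0 < k\<close> w by (intro sum_pos) auto
    moreover have "d 0 \<noteq> 0"
      using d(2)[rule_format, of 0] by auto
    ultimately show False
      using balanced by simp
  qed
  moreover have "even (card {l\<in>{0..<k}. d (l - 1) \<noteq> d l})"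
    using d by (rule card_sign_changes_even)
  ultimately show ?thesis
    by presburger
qed

section \<open>Weak genericity\<close>

lemma weak_generic_signed_sum:
  fixes v :: "'a \<Rightarrow> nat" and s :: "'a \<Rightarrow> int"
  assumes wg: "weak_generic n r" and I: "finite I" "inj_on v I" "v ` I \<subseteq> {1..n}"
    and signs: "\<forall>i\<in>I. s i \<in> {-1, 0, 1}"
    and zeros: "4 \<le> n - card I + card {i\<in>I. s i = 0}"
    and sum: "(\<Sum>i\<in>I. of_int (s i) * r (v i)) = 0"
  shows "\<forall>i\<in>I. s i = 0"
proof -
  define \<sigma> where "\<sigma> j = (if j \<in> v ` I then s (the_inv_into I v j) else 0)" for j
  have \<sigma>_v: "\<sigma> (v i) = s i" if "i \<in> I" for i
    using that I(2) by (simp add: \<sigma>_def the_inv_into_f_f)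
  have "(\<Sum>j\<in>{1..n}. of_int (\<sigma> j) * r j) = (\<Sum>j\<in>v ` I. of_int (\<sigma> j) * r j)"
    using I(3) by (intro sum.mono_neutral_right) (auto simp: \<sigma>_def)
  also have "\<dots> = (\<Sum>i\<in>I. of_int (s i) * r (v i))"
    using I(2) by (simp add: sum.reindex \<sigma>_v)
  finally have "(\<Sum>j\<in>{1..n}. of_int (\<sigma> j) * r j) = 0"
    using sum by simp
  moreover have "\<forall>j\<in>{1..n}. \<sigma> j \<in> {-1, 0, 1}"
    using signs by (auto simp: \<sigma>_def the_inv_into_into[OF I(2)])
  moreover have "4 \<le> card {j\<in>{1..n}. \<sigma> j = 0}"
  proof -
    let ?A = "{1..n} - v ` I" and ?B = "v ` {i\<in>I. s i = 0}"
    have "?A \<union> ?B \<subseteq> {j\<in>{1..n}. \<sigma> j = 0}"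
      using I(3) by (auto simp: \<sigma>_v) (simp add: \<sigma>_def)
    then have "card (?A \<union> ?B) \<le> card {j\<in>{1..n}. \<sigma> j = 0}"
      by (intro card_mono) simp_all
    moreover have "card (?A \<union> ?B) = card ?A + card ?B"
      using I(1) by (intro card_Un_disjoint) auto
    moreover have "card ?A = n - card I"
      using I by (simp add: card_Diff_subset card_image)
    moreover have "card ?B = card {i\<in>I. s i = 0}"
      using I(2) by (simp add: card_image inj_on_subset)
    ultimately show ?thesis
      using zeros by linarith
  qed
  ultimately have "\<forall>j\<in>{1..n}. \<sigma> j = 0"
    using wg unfolding weak_generic_def by blast
  then show ?thesis
    using I(3) by (metis \<sigma>_v image_subset_iff)
qed

lemma weak_generic_distinct_radii:
  assumes "weak_generic n r" "6 \<le> n" "i \<in> {1..n}" "j \<in> {1..n}" "i \<noteq> j"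
  shows "r i \<noteq> r j"
proof
  assume "r i = r j"
  have "\<forall>l\<in>{i, j}. (if l = i then 1 else -1 :: int) = 0"
    using assms \<open>r i = r j\<close>
    by (intro weak_generic_signed_sum[where v=id and r=r and n=n]) auto
  then show False by simp
qed

lemma weak_generic_alternating:
  fixes v :: "int \<Rightarrow> nat" and d :: "int \<Rightarrow> int" and k :: int
  assumes wg: "weak_generic n r"
    and v: "periodic_fun_simple v k" "inj_on v {0..<k}" "v ` {0..<k} \<subseteq> {1..n}"
    and k: "0 < k" "k + 2 \<le> int n"
    and d: "periodic_fun_simple d k" "\<forall>l. d l \<in> {-1, 1}"
    and pos: "\<forall>l. 0 < r (v l)"
    and balanced: "(\<Sum>l\<in>{0..<k}. of_int (d l) * (r (v l) + r (v (l + 1)))) = 0"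
  shows "d (l + 1) = - d l"
proof -
  \<comment> \<open>\<open>2 * s l\<close> is the coefficient of \<open>r (v l)\<close> in the balanced sum; it vanishes exactly
    where the direction changes.\<close>
  define s where "s l = (if d (l - 1) = d l then d l else 0)" for l
  have d_pred: "periodic_fun_simple (\<lambda>l. d (l - 1)) k"
    using d(1) by (rule periodic_fun_simple_shift)
  then have s_periodic: "periodic_fun_simple s k"
    using d(1) unfolding periodic_fun_simple_def s_def by simp
  have two_s: "2 * s l = d (l - 1) + d l" for l
    using d(2)[rule_format, of l] d(2)[rule_format, of "l - 1"] by (auto simp: s_def)
  have "2 * (\<Sum>l\<in>{0..<k}. of_int (s l) * r (v l)) = (\<Sum>l\<in>{0..<k}. of_int (2 * s l) * r (v l))"
    by (simp add: sum_distrib_left mult.assoc)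
  also have "\<dots> = (\<Sum>l\<in>{0..<k}. of_int (d (l - 1)) * r (v l)) + (\<Sum>l\<in>{0..<k}. of_int (d l) * r (v l))"
    by (simp add: two_s distrib_right sum.distrib)
  also have "(\<Sum>l\<in>{0..<k}. of_int (d (l - 1)) * r (v l)) = (\<Sum>l\<in>{0..<k}. of_int (d l) * r (v (l + 1)))"
    using sum.periodic_shift[of "\<lambda>l. of_int (d (l - 1)) * r (v l)" k] d_pred v(1)
    by (simp add: periodic_fun_simple_def)
  finally have sum_s: "(\<Sum>l\<in>{0..<k}. of_int (s l) * r (v l)) = 0"
    using balanced by (simp add: algebra_simps sum.distrib)
  have "d l \<noteq> 0" for l
    using d(2)[rule_format, of l] by auto
  then have "{l\<in>{0..<k}. s l = 0} = {l\<in>{0..<k}. d (l - 1) \<noteq> d l}"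
    by (auto simp: s_def)
  then have "2 \<le> card {l\<in>{0..<k}. s l = 0}"
    using sign_changes_ge_2[OF d k(1) _ balanced] pos by (simp add: add_pos_pos)
  moreover have "card {0..<k} + 2 \<le> n"
    using k by (simp add: nat_le_iff)
  ultimately have "\<forall>l\<in>{0..<k}. s l = 0"
    using d(2) by (intro weak_generic_signed_sum[OF wg _ v(2,3) _ _ sum_s]) (auto simp: s_def)
  then have "s (l + 1) = 0"
    by (rule periodic_fun_simple_allI[OF s_periodic k(1), where P="\<lambda>x. x = 0"])
  then show ?thesis
    using d(2)[rule_format, of l] d(2)[rule_format, of "l + 1"] by (auto simp: s_def)
qed

section \<open>Alternating cyclic chains of intervals\<close>

(* Interval l is [Y l - R l, Y l + R l]; indices of the same parity stand for squares on the
   same side of the common contact line. *)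
locale interval_chain =
  fixes Y R :: "int \<Rightarrow> real" and k :: int
  assumes even_period: "even k" and period_ge_3: "3 \<le> k"
    and periodic_Y: "periodic_fun_simple Y k" and periodic_R: "periodic_fun_simple R k"
    and radius_pos: "0 < R l"
    and consecutive_meet: "\<bar>Y (l + 1) - Y l\<bar> \<le> R l + R (l + 1)"
    and same_parity_disjoint: "even (l - l') \<Longrightarrow> \<not> k dvd (l - l') \<Longrightarrow> R l + R l' \<le> \<bar>Y l - Y l'\<bar>"
begin

lemma reflect: "interval_chain (\<lambda>l. Y (- l)) (\<lambda>l. R (- l)) k"
proof (rule interval_chain.intro)
  show "\<bar>Y (- (l + 1)) - Y (- l)\<bar> \<le> R (- l) + R (- (l + 1))" for l
    using consecutive_meet[of "- 1 - l"] by (simp add: abs_minus_commute add.commute)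
  show "R (- l) + R (- l') \<le> \<bar>Y (- l) - Y (- l')\<bar>" if "even (l - l')" "\<not> k dvd (l - l')" for l l'
    using that same_parity_disjoint[of "- l" "- l'"] by (simp add: dvd_diff_commute)
qed (simp_all add: even_period period_ge_3 radius_pos periodic_fun_simple_reflect periodic_Y periodic_R)

lemma period_ge_4: "4 \<le> k"
  using even_period period_ge_3 by presburger

lemma not_dvd_small: "0 < j \<Longrightarrow> j < k \<Longrightarrow> \<not> k dvd j"
  using zdvd_imp_le by fastforce

lemma top_window_corner:
  assumes top: "\<And>l. even (l - m) \<Longrightarrow> Y l + R l \<le> Y m + R m"
    and orient: "Y (m - 1) \<le> Y (m + 1)"
  shows "Y (m - 1) + R (m - 1) = Y m - R m" "Y (m + 2) + R (m + 2) = Y m - R m"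
    "Y (m + 1) - R (m + 1) = Y m - R m"
proof -
  \<comment> \<open>Interval \<open>m + 2\<close> lies below \<open>m\<close>, so the endpoints collapse in the cycle
    top(m-1) \<le> bottom(m+1) \<le> top(m+2) \<le> bottom(m) \<le> top(m-1).\<close>
  have "R (m + 1) + R (m - 1) \<le> \<bar>Y (m + 1) - Y (m - 1)\<bar>" "R (m + 2) + R m \<le> \<bar>Y (m + 2) - Y m\<bar>"
    using same_parity_disjoint not_dvd_small period_ge_4 by simp_all
  moreover have "\<bar>Y m - Y (m - 1)\<bar> \<le> R (m - 1) + R m"
    "\<bar>Y (m + 2) - Y (m + 1)\<bar> \<le> R (m + 1) + R (m + 2)"
    using consecutive_meet[of "m - 1"] consecutive_meet[of "m + 1"] by (simp_all add: add.assoc)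
  moreover have "Y (m + 2) + R (m + 2) \<le> Y m + R m"
    using top by simp
  ultimately show "Y (m - 1) + R (m - 1) = Y m - R m" "Y (m + 2) + R (m + 2) = Y m - R m"
    "Y (m + 1) - R (m + 1) = Y m - R m"
    using orient radius_pos[of "m + 2"] by (auto simp: abs_if split: if_splits)
qed

lemma top_window_period_4:
  assumes top: "\<And>l. even (l - m) \<Longrightarrow> Y l + R l \<le> Y m + R m"
    and orient: "Y (m - 1) \<le> Y (m + 1)" and "k = 4"
  shows "\<bar>Y l - (Y m - R m)\<bar> = R l"
proof -
  have "(l - (m - 1)) mod k \<in> {0, 1, 2, 3}"
    using \<open>k = 4\<close> by auto
  then show ?thesis
    using periodic_fun_simple_mod_offset[OF periodic_Y, of "m - 1" l]
      periodic_fun_simple_mod_offset[OF periodic_R, of "m - 1" l]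
      top_window_corner[OF top orient] radius_pos[of l]
    by (auto simp: algebra_simps)
qed

lemma top_window_equal_radii:
  assumes top: "\<And>l. even (l - m) \<Longrightarrow> Y l + R l \<le> Y m + R m"
    and orient: "Y (m - 1) \<le> Y (m + 1)" and "k \<noteq> 4"
  shows "R (m - 1) = R (m + 2)"
proof -
  \<comment> \<open>Interval \<open>m + 3\<close> is trapped below \<open>m - 1\<close> and \<open>m - 2\<close> below \<open>m + 2\<close>, which forces
    bottom(m-1) \<le> top(m-2) \<le> bottom(m+2) \<le> top(m+3) \<le> bottom(m-1).\<close>
  have "6 \<le> k"
    using \<open>k \<noteq> 4\<close> period_ge_4 even_period by presburger
  then have "R (m + 3) + R (m + 1) \<le> \<bar>Y (m + 3) - Y (m + 1)\<bar>"
    "R (m + 3) + R (m - 1) \<le> \<bar>Y (m + 3) - Y (m - 1)\<bar>"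
    "R (m - 2) + R (m + 2) \<le> \<bar>Y (m - 2) - Y (m + 2)\<bar>"
    "R (m - 2) + R m \<le> \<bar>Y (m - 2) - Y m\<bar>"
    using same_parity_disjoint not_dvd_small by simp_all
  moreover have "\<bar>Y (m + 3) - Y (m + 2)\<bar> \<le> R (m + 2) + R (m + 3)"
    "\<bar>Y (m - 1) - Y (m - 2)\<bar> \<le> R (m - 2) + R (m - 1)"
    using consecutive_meet[of "m + 2"] consecutive_meet[of "m - 2"] by (simp_all add: add.assoc)
  moreover have "Y (m - 2) + R (m - 2) \<le> Y m + R m"
    using top by simp
  ultimately show ?thesis
    using top_window_corner[OF top orient] radius_pos[of "m + 1"] radius_pos[of "m + 3"]
      radius_pos[of "m - 2"]
    by (auto simp: abs_if split: if_splits)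
qed

lemma top_window:
  assumes "\<And>l. even (l - m) \<Longrightarrow> Y l + R l \<le> Y m + R m" and "Y (m - 1) \<le> Y (m + 1)"
  shows "(k = 4 \<and> (\<exists>t. \<forall>l. \<bar>Y l - t\<bar> = R l)) \<or> R (m - 1) = R (m + 2)"
  using top_window_period_4[OF assms] top_window_equal_radii[OF assms] by blast

lemma exists_top_even:
  obtains m where "even m" "\<And>l. even l \<Longrightarrow> Y l + R l \<le> Y m + R m"
proof -
  let ?E = "{l\<in>{0..<k}. even l}"
  have "finite ?E"
    by (rule finite_subset[OF _ finite_atLeastLessThan_int[of 0 k]]) auto
  moreover have "0 \<in> ?E"
    using period_ge_3 by auto
  ultimately have max_in: "Max ((\<lambda>l. Y l + R l) ` ?E) \<in> (\<lambda>l. Y l + R l) ` ?E"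
    by (intro Max_in) auto
  then obtain m where m: "m \<in> ?E" "Y m + R m = Max ((\<lambda>l. Y l + R l) ` ?E)"
    by auto
  have "Y l + R l \<le> Y m + R m" if "even l" for l
  proof -
    have "l mod k \<in> ?E"
      using that even_period period_ge_3 by (auto simp: even_iff_mod_2_eq_zero mod_mod_cancel)
    then have "Y (l mod k) + R (l mod k) \<le> Y m + R m"
      unfolding m(2) using \<open>finite ?E\<close> by (intro Max_ge) auto
    then show ?thesis
      by (simp add: periodic_fun_simple_mod[OF periodic_Y] periodic_fun_simple_mod[OF periodic_R])
  qed
  then show ?thesis
    using m(1) that by blast
qed

lemma corner_or_equal_radii:
  "(k = 4 \<and> (\<exists>t. \<forall>l. \<bar>Y l - t\<bar> = R l)) \<or> (\<exists>l l'. \<not> k dvd (l - l') \<and> R l = R l')"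
proof -
  obtain m where "even m" and top: "\<And>l. even l \<Longrightarrow> Y l + R l \<le> Y m + R m"
    using exists_top_even by blast
  have not_dvd_3: "\<not> k dvd ((m - 1) - (m + 2))" "\<not> k dvd ((m + 1) - (m - 2))"
    using not_dvd_small[of 3] period_ge_4 by (simp_all add: dvd_diff_commute)
  consider "Y (m - 1) \<le> Y (m + 1)" | "Y (m + 1) \<le> Y (m - 1)"
    by linarith
  then show ?thesis
  proof cases
    case 1
    then have "(k = 4 \<and> (\<exists>t. \<forall>l. \<bar>Y l - t\<bar> = R l)) \<or> R (m - 1) = R (m + 2)"
      using \<open>even m\<close> top by (intro top_window) auto
    then show ?thesis
      using not_dvd_3(1) by blast
  next
    case 2
    interpret reflected: interval_chain "\<lambda>l. Y (- l)" "\<lambda>l. R (- l)" k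
      by (rule reflect)
    have "(k = 4 \<and> (\<exists>t. \<forall>l. \<bar>Y (- l) - t\<bar> = R (- l))) \<or> R (m + 1) = R (m - 2)"
      using reflected.top_window[of "- m"] \<open>even m\<close> top 2 by (simp add: add.commute)
    moreover have "\<forall>l. \<bar>Y l - t\<bar> = R l" if "\<forall>l. \<bar>Y (- l) - t\<bar> = R (- l)" for t
      using that[rule_format, of "- l" for l] by simp
    ultimately show ?thesis
      using not_dvd_3(2) by blast
  qed
qed

end

section \<open>Cycles of contacts\<close>

(* The squares v l of a k-periodically enumerated cycle, consecutive ones touching in the
   X-direction; X and Y are the centre coordinates, swapped for a cycle of E_y. *)
locale contact_cycle =
  fixes n :: nat and r :: "nat \<Rightarrow> real" and X Y :: "nat \<Rightarrow> real" and v :: "int \<Rightarrow> nat" and k :: int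
  assumes weak_generic: "weak_generic n r"
    and radius_pos: "\<forall>i\<in>{1..n}. 0 < r i"
    and interiors_disjoint: "\<And>i j a b. i \<in> {1..n} \<Longrightarrow> j \<in> {1..n} \<Longrightarrow> i \<noteq> j \<Longrightarrow>
      \<bar>a - X i\<bar> < r i \<Longrightarrow> \<bar>b - Y i\<bar> < r i \<Longrightarrow> \<bar>a - X j\<bar> < r j \<Longrightarrow> \<bar>b - Y j\<bar> < r j \<Longrightarrow> False"
    and periodic_v: "periodic_fun_simple v k"
    and inj_v: "inj_on v {0..<k}" and range_v: "v ` {0..<k} \<subseteq> {1..n}"
    and length_ge_3: "3 \<le> k" and length_le: "k + 2 \<le> int n"
    and x_contact: "\<And>l. r (v l) + r (v (l + 1)) = \<bar>X (v l) - X (v (l + 1))\<bar>"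
    and x_dominant: "\<And>l. \<bar>Y (v l) - Y (v (l + 1))\<bar> \<le> \<bar>X (v l) - X (v (l + 1))\<bar>"
begin

lemma vertex_mem: "v l \<in> {1..n}"
proof (rule periodic_fun_simple_allI[OF periodic_v, where P = "\<lambda>i. i \<in> {1..n}"])
  show "0 < k"
    using length_ge_3 by simp
  show "\<forall>l\<in>{0..<k}. v l \<in> {1..n}"
    using range_v by blast
qed

lemma vertex_radius_pos: "0 < r (v l)"
  using radius_pos vertex_mem by blast

lemma vertex_eq_iff: "v l = v l' \<longleftrightarrow> k dvd (l - l')"
proof -
  have "v l = v l' \<longleftrightarrow> v (l mod k) = v (l' mod k)"
    by (simp add: periodic_fun_simple_mod[OF periodic_v])
  also have "\<dots> \<longleftrightarrow> l mod k = l' mod k"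
    using inj_v length_ge_3 by (auto dest: inj_onD)
  finally show ?thesis
    by (simp add: mod_eq_dvd_iff)
qed

definition dir :: "int \<Rightarrow> int" where
  "dir l = (if X (v l) \<le> X (v (l + 1)) then 1 else -1)"

lemma dir_cases: "dir l \<in> {-1, 1}"
  by (simp add: dir_def)

lemma X_step: "X (v (l + 1)) - X (v l) = of_int (dir l) * (r (v l) + r (v (l + 1)))"
  using x_contact[of l] by (auto simp: dir_def abs_if)

lemma dir_alternates: "dir (l + 1) = - dir l"
proof (rule weak_generic_alternating[OF weak_generic periodic_v inj_v range_v _ length_le])
  show "periodic_fun_simple dir k"
    using periodic_v periodic_fun_simple_shift[OF periodic_v, of "- 1"]
    unfolding periodic_fun_simple_def dir_def by (simp add: ac_simps)
  have X_periodic: "periodic_fun_simple (\<lambda>l. X (v l)) k"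
    using periodic_v by (simp add: periodic_fun_simple_def)
  then show "(\<Sum>l\<in>{0..<k}. of_int (dir l) * (r (v l) + r (v (l + 1)))) = 0"
    by (simp flip: X_step add: sum_subtractf sum.periodic_shift[OF X_periodic])
qed (use length_ge_3 dir_cases vertex_radius_pos in auto)

lemma dir_parity: "dir l = (if even l then dir 0 else - dir 0)"
proof -
  have "(\<lambda>l. if even l then dir l else - dir l) l = (\<lambda>l. if even l then dir l else - dir l) 0"
    by (rule shift_invariant_const) (simp add: dir_alternates)
  then show ?thesis
    by (auto split: if_splits)
qed

lemma even_period: "even k"
proof (rule ccontr)
  assume "odd k"
  moreover have "dir k = dir 0"
    using periodic_v[unfolded periodic_fun_simple_def, rule_format, of 0]
      periodic_v[unfolded periodic_fun_simple_def, rule_format, of 1]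
    by (simp add: dir_def add.commute)
  ultimately have "dir 0 = - dir 0"
    using dir_parity[of k] by simp
  then show False
    using dir_cases[of 0] by auto
qed

lemma contact_line: "X (v l) + of_int (dir l) * r (v l) = X (v 0) + of_int (dir 0) * r (v 0)"
proof (rule shift_invariant_const[where f = "\<lambda>l. X (v l) + of_int (dir l) * r (v l)"])
  show "X (v (l + 1)) + of_int (dir (l + 1)) * r (v (l + 1)) = X (v l) + of_int (dir l) * r (v l)" for l
    using X_step[of l] dir_alternates[of l] by (simp add: algebra_simps)
qed

lemma same_side_separated:
  assumes "even (l - l')" "\<not> k dvd (l - l')"
  shows "r (v l) + r (v l') \<le> \<bar>Y (v l) - Y (v l')\<bar>"
proof (rule ccontr)
  assume "\<not> ?thesis"
  moreover have "dir l = dir l'"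
    using assms(1) dir_parity[of l] dir_parity[of l'] by auto
  ultimately have "\<exists>a b. \<bar>a - X (v l)\<bar> < r (v l) \<and> \<bar>b - Y (v l)\<bar> < r (v l) \<and>
      \<bar>a - X (v l')\<bar> < r (v l') \<and> \<bar>b - Y (v l')\<bar> < r (v l')"
    using contact_line[of l] contact_line[of l'] dir_cases[of l] vertex_radius_pos
    by (intro same_side_squares_overlap[where D = "of_int (dir l)"]) auto
  moreover have "v l \<noteq> v l'"
    using assms(2) vertex_eq_iff by blast
  ultimately show False
    using interiors_disjoint vertex_mem by blast
qed

lemma interval_chain: "interval_chain (\<lambda>l. Y (v l)) (\<lambda>l. r (v l)) k"
proof (rule interval_chain.intro)
  show "periodic_fun_simple (\<lambda>l. Y (v l)) k" "periodic_fun_simple (\<lambda>l. r (v l)) k"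
    using periodic_v by (simp_all add: periodic_fun_simple_def)
  show "\<bar>Y (v (l + 1)) - Y (v l)\<bar> \<le> r (v l) + r (v (l + 1))" for l
    using x_contact[of l] x_dominant[of l] by (simp add: abs_minus_commute)
qed (use even_period length_ge_3 vertex_radius_pos same_side_separated in auto)

theorem common_corner: "k = 4 \<and> (\<exists>a b. \<forall>l. \<bar>a - X (v l)\<bar> = r (v l) \<and> \<bar>b - Y (v l)\<bar> = r (v l))"
  using interval_chain.corner_or_equal_radii[OF interval_chain]
proof
  assume "k = 4 \<and> (\<exists>t. \<forall>l. \<bar>Y (v l) - t\<bar> = r (v l))"
  moreover have "\<bar>X (v 0) + of_int (dir 0) * r (v 0) - X (v l)\<bar> = r (v l)" for l
    using contact_line[of l] dir_cases[of l] vertex_radius_pos[of l] by auto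
  ultimately show ?thesis
    by (metis abs_minus_commute)
next
  assume "\<exists>l l'. \<not> k dvd (l - l') \<and> r (v l) = r (v l')"
  then obtain l l' where "v l \<noteq> v l'" "r (v l) = r (v l')"
    using vertex_eq_iff by blast
  moreover have "6 \<le> n"
    using length_le length_ge_3 even_period by presburger
  ultimately show ?thesis
    using weak_generic_distinct_radii[OF weak_generic] vertex_mem by blast
qed

end

definition cyclic_nth :: "'a list \<Rightarrow> int \<Rightarrow> 'a" where
  "cyclic_nth xs l = xs ! nat (l mod int (length xs))"

lemma periodic_cyclic_nth: "periodic_fun_simple (cyclic_nth xs) (int (length xs))"
  by (simp add: periodic_fun_simple_def cyclic_nth_def)

lemma cyclic_nth_of_nat: "i < length xs \<Longrightarrow> cyclic_nth xs (int i) = xs ! i"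
  by (simp add: cyclic_nth_def)

lemma cyclic_nth_in_set: "xs \<noteq> [] \<Longrightarrow> cyclic_nth xs l \<in> set xs"
  by (simp add: cyclic_nth_def nat_less_iff)

lemma inj_on_cyclic_nth: "distinct xs \<Longrightarrow> inj_on (cyclic_nth xs) {0..<int (length xs)}"
  by (auto simp: inj_on_def cyclic_nth_def nth_eq_iff_index_eq nat_less_iff)

lemma is_cycle_cyclic_nth_edge:
  assumes "is_cycle n F c"
  shows "{cyclic_nth c l, cyclic_nth c (l + 1)} \<in> F"
proof -
  let ?k = "length c"
  define i where "i = nat (l mod int ?k)"
  have "3 \<le> ?k"
    using assms by (simp add: is_cycle_def)
  then have "0 < ?k"
    by linarith
  then have "i < ?k"
    by (simp add: i_def nat_less_iff)
  have "nat ((l + 1) mod int ?k) = nat ((l mod int ?k + 1) mod int ?k)"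
    by (simp add: mod_add_left_eq)
  also have "\<dots> = (i + 1) mod ?k"
    using \<open>0 < ?k\<close> by (simp add: i_def nat_mod_distrib nat_add_distrib)
  finally show ?thesis
    using assms \<open>i < ?k\<close> unfolding is_cycle_def cyclic_nth_def i_def by simp
qed

lemma is_cycle_contact_corner:
  fixes X Y :: "nat \<Rightarrow> real"
  assumes wg: "weak_generic n r" and pos: "\<forall>i\<in>{1..n}. 0 < r i"
    and disjoint: "\<And>i j a b. i \<in> {1..n} \<Longrightarrow> j \<in> {1..n} \<Longrightarrow> i \<noteq> j \<Longrightarrow>
      \<bar>a - X i\<bar> < r i \<Longrightarrow> \<bar>b - Y i\<bar> < r i \<Longrightarrow> \<bar>a - X j\<bar> < r j \<Longrightarrow> \<bar>b - Y j\<bar> < r j \<Longrightarrow> False"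
    and cycle: "is_cycle n F c" and short: "length c \<le> n - 2"
    and contact: "\<And>i j. {i, j} \<in> F \<Longrightarrow> r i + r j = \<bar>X i - X j\<bar> \<and> \<bar>Y i - Y j\<bar> \<le> \<bar>X i - X j\<bar>"
  shows "length c = 4 \<and> (\<exists>a b. \<forall>i\<in>set c. \<bar>a - X i\<bar> = r i \<and> \<bar>b - Y i\<bar> = r i)"
proof -
  have c: "3 \<le> length c" "distinct c" "set c \<subseteq> {1..n}"
    using cycle by (auto simp: is_cycle_def)
  have "cyclic_nth c l \<in> set c" for l
    using c(1) by (intro cyclic_nth_in_set) auto
  then have range: "cyclic_nth c ` {0..<int (length c)} \<subseteq> {1..n}"
    using c(3) by blast
  have len: "3 \<le> int (length c)" "int (length c) + 2 \<le> int n"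
    using c(1) short by linarith+
  interpret contact_cycle n r X Y "cyclic_nth c" "int (length c)"
    by (rule contact_cycle.intro[OF wg pos disjoint periodic_cyclic_nth inj_on_cyclic_nth[OF c(2)] range len])
      (use contact[OF is_cycle_cyclic_nth_edge[OF cycle]] in blast)+
  obtain a b where "length c = 4" "\<forall>l. \<bar>a - X (cyclic_nth c l)\<bar> = r (cyclic_nth c l) \<and> \<bar>b - Y (cyclic_nth c l)\<bar> = r (cyclic_nth c l)"
    using common_corner by auto
  moreover have "set c = cyclic_nth c ` int ` {..<length c}"
    by (auto simp: in_set_conv_nth cyclic_nth_of_nat image_iff)
  ultimately show ?thesis
    by auto
qed

theorem lemma17:
  fixes n :: nat and r :: "nat \<Rightarrow> real" and p :: "nat \<Rightarrow> real \<times> real" and c :: "nat list"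
  assumes "homothetic_packing n r p"
    and "weak_generic n r"
    and "is_cycle n (edges_x n r p) c \<or> is_cycle n (edges_y n r p) c"
    and "length c \<le> n - 2"
  shows "length c = 4 \<and> share_corner r p {c ! 0, c ! 1, c ! 2, c ! 3}"
proof -
  have pos: "\<forall>i\<in>{1..n}. 0 < r i"
    using assms(1) by (simp add: homothetic_packing_def)
  note disjoint = homothetic_packing_interiors_disjoint[OF assms(1)]
  have "length c = 4 \<and> (\<exists>a b. \<forall>i\<in>set c. \<bar>a - fst (p i)\<bar> = r i \<and> \<bar>b - snd (p i)\<bar> = r i)"
    using assms(3)
  proof
    assume cycle: "is_cycle n (edges_x n r p) c"
    show ?thesis
      by (rule is_cycle_contact_corner[OF assms(2) pos _ cycle assms(4) edges_x_contact])
        (use disjoint in blast)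
  next
    assume cycle: "is_cycle n (edges_y n r p) c"
    have "length c = 4 \<and> (\<exists>b a. \<forall>i\<in>set c. \<bar>b - snd (p i)\<bar> = r i \<and> \<bar>a - fst (p i)\<bar> = r i)"
      by (rule is_cycle_contact_corner[OF assms(2) pos _ cycle assms(4) edges_y_contact])
        (use disjoint in blast)
    then show ?thesis
      by blast
  qed
  moreover have "{c ! 0, c ! 1, c ! 2, c ! 3} \<subseteq> set c" if "length c = 4"
    using that by (simp add: nth_mem)
  ultimately show ?thesis
    unfolding share_corner_def by (blast intro: mem_cornersI)
qed

end
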